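(* Let $U=(U_{ij})_{i,j=1}^M$, $U_{ij}\in M_M(\mathbb C)$, and $V=(V_{ab})_{a,b=1}^N$, $V_{ab}\in M_N(\mathbb C)$, be projective models, $Q\in M_{M\times N}(\mathbb T)$, and $W=U\otimes_QV$. Then for all $p,r\geq1$, $$c_p^r(W)=\frac{1}{(MN)^r}\sum_{i,b}\Delta_U(i)\,\Delta_{V'}(b^t)\prod_{t=1}^r\prod_{s=1}^p\frac{Q_{i_s^tb_s^t}\,Q_{i_s^{t+1}b_{s+1}^t}}{Q_{i_s^tb_{s+1}^t}\,Q_{i_s^{t+1}b_s^t}},$$ where the sum is over $i=(i_s^t)\in M_{r\times p}(\{1,\dots,M\})$ and $b=(b_s^t)\in M_{r\times p}(\{1,\dots,N\})$ ($t$ = row index, $s$ = column index), the upper indices are taken modulo $r$ and lower indices modulo $p$ (so $i^{r+1}=i^1$, $b_{p+1}=b_1$), $$\Delta_U(i)=M^r\,(T_p^U)_{i_1^1\dots i_p^1,\,i_1^2\dots i_p^2}(T_p^U)_{i_1^2\dots i_p^2,\,i_1^3\dots i_p^3}\cdots(T_p^U)_{i_1^r\dots i_p^r,\,i_1^1\dots i_p^1},$$ and similarly $\Delta_{V'}(b^t)=N^p\,(T_r^{V'})_{b_1^1\dots b_1^r,\,b_2^1\dots b_2^r}\cdots(T_r^{V'})_{b_p^1\dots b_p^r,\,b_1^1\dots b_1^r}$.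
   Context: A square matrix of operators is magic if its entries are orthogonal projections and rows and columns sum to $1$. For $U=(U_{ij})_{i,j=1}^n$, $U_{ij}\in M_n(\mathbb C)$, $U'$ is given by $(U'_{kl})_{ij}=(U_{ij})_{kl}$, and $U$ is a projective model if $U$ and $U'$ are magic. $T_p^U\in M_{n^p}(\mathbb C)$ has entries $(T_p^U)_{i_1\dots i_p,j_1\dots j_p}=tr(U_{i_1j_1}\cdots U_{i_pj_p})$ with $tr$ the normalized trace, and $c_p^r(U)=Tr((T_p^U)^r)$. $W=U\otimes_QV$ is defined by $(W_{ia,jb})_{kc,ld}=\frac{Q_{ic}Q_{jd}}{Q_{id}Q_{jc}}(U_{ij})_{kl}(V_{ab})_{cd}$, with $i,j,k,l\le M$ and $a,b,c,d\le N$; $c_p^r(W)$ is defined with $n=MN$. *)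

theory Defs
  imports Complex_Main "Jordan_Normal_Form.Matrix"
begin

text \<open>Block matrices A = (A i j), i,j < n, with A i j an n x n complex matrix (0-based indices).\<close>

definition adj_mat :: "complex mat \<Rightarrow> complex mat" where
  "adj_mat P = mat (dim_col P) (dim_row P) (\<lambda>(k,l). cnj (P $$ (l,k)))"

definition orth_proj :: "nat \<Rightarrow> complex mat \<Rightarrow> bool" where
  "orth_proj n P \<longleftrightarrow> P \<in> carrier_mat n n \<and> P * P = P \<and> adj_mat P = P"

definition magic :: "nat \<Rightarrow> (nat \<Rightarrow> nat \<Rightarrow> complex mat) \<Rightarrow> bool" where
  "magic n A \<longleftrightarrow>
     (\<forall>i<n. \<forall>j<n. orth_proj n (A i j)) \<and>
     (\<forall>i<n. \<forall>k<n. \<forall>l<n. (\<Sum>j<n. A i j $$ (k,l)) = (1\<^sub>m n) $$ (k,l)) \<and>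
     (\<forall>j<n. \<forall>k<n. \<forall>l<n. (\<Sum>i<n. A i j $$ (k,l)) = (1\<^sub>m n) $$ (k,l))"

definition prime_bm :: "nat \<Rightarrow> (nat \<Rightarrow> nat \<Rightarrow> complex mat) \<Rightarrow> (nat \<Rightarrow> nat \<Rightarrow> complex mat)" where
  "prime_bm n U = (\<lambda>k l. mat n n (\<lambda>(i,j). U i j $$ (k,l)))"

definition projective_model :: "nat \<Rightarrow> (nat \<Rightarrow> nat \<Rightarrow> complex mat) \<Rightarrow> bool" where
  "projective_model n U \<longleftrightarrow> magic n U \<and> magic n (prime_bm n U)"

definition mtrace :: "complex mat \<Rightarrow> complex" where
  "mtrace A = (\<Sum>k<dim_row A. A $$ (k,k))"

definition ntr :: "nat \<Rightarrow> complex mat \<Rightarrow> complex" where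
  "ntr n A = mtrace A / of_nat n"

definition mprod :: "nat \<Rightarrow> complex mat list \<Rightarrow> complex mat" where
  "mprod n As = foldr (\<lambda>A B. A * B) As (1\<^sub>m n)"

definition T_entry :: "nat \<Rightarrow> (nat \<Rightarrow> nat \<Rightarrow> complex mat) \<Rightarrow> nat \<Rightarrow> (nat \<Rightarrow> nat) \<Rightarrow> (nat \<Rightarrow> nat) \<Rightarrow> complex" where
  "T_entry n U p x y = ntr n (mprod n (map (\<lambda>s. U (x s) (y s)) [0..<p]))"

text \<open>Multi-index (x_1..x_p) in {0..<n}^p identified with x < n^p via base-n digits
  (x_1 most significant).\<close>
definition digit :: "nat \<Rightarrow> nat \<Rightarrow> nat \<Rightarrow> nat \<Rightarrow> nat" where
  "digit n p x s = (x div n ^ (p - 1 - s)) mod n"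

definition T_mat :: "nat \<Rightarrow> (nat \<Rightarrow> nat \<Rightarrow> complex mat) \<Rightarrow> nat \<Rightarrow> complex mat" where
  "T_mat n U p = mat (n ^ p) (n ^ p) (\<lambda>(x,y). T_entry n U p (digit n p x) (digit n p y))"

definition c_pr :: "nat \<Rightarrow> (nat \<Rightarrow> nat \<Rightarrow> complex mat) \<Rightarrow> nat \<Rightarrow> nat \<Rightarrow> complex" where
  "c_pr n U p r = mtrace (T_mat n U p ^\<^sub>m r)"

text \<open>W = U \<otimes>_Q V; the pair (i,a), i<M, a<N, is encoded as i*N + a.\<close>
definition qtensor :: "nat \<Rightarrow> nat \<Rightarrow> (nat \<Rightarrow> nat \<Rightarrow> complex) \<Rightarrow> (nat \<Rightarrow> nat \<Rightarrow> complex mat)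
    \<Rightarrow> (nat \<Rightarrow> nat \<Rightarrow> complex mat) \<Rightarrow> (nat \<Rightarrow> nat \<Rightarrow> complex mat)" where
  "qtensor M N Q U V = (\<lambda>\<alpha> \<beta>.
     (let i = \<alpha> div N; a = \<alpha> mod N; j = \<beta> div N; b = \<beta> mod N in
      mat (M*N) (M*N) (\<lambda>(\<gamma>,\<delta>).
        (let k = \<gamma> div N; c = \<gamma> mod N; l = \<delta> div N; d = \<delta> mod N in
          Q i c * Q j d / (Q i d * Q j c) * (U i j $$ (k,l)) * (V a b $$ (c,d))))))"

end

theory Submission
  imports Defs
begin

text \<open>
  The trace of \<open>(T\<^sub>p\<^sup>W)\<^sup>r\<close> is a sum over closed walks of length \<open>r\<close> in the multi-indices
  of length \<open>p\<close>, i.e. over \<open>r \<times> p\<close> arrays of indices of \<open>W\<close>, and every entry of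
  \<open>T\<^sub>p\<^sup>W\<close> is in turn a normalized trace, hence a sum over closed walks in the basis of
  \<open>\<complex>\<^sup>M\<^sup>N\<close>. Writing all indices of \<open>W\<close> as pairs \<open>i * N + a\<close>, an entry of \<open>W\<close> is the
  twist of \<open>Q\<close> times an entry of \<open>U\<close> times an entry of \<open>V\<close>, and the sums decouple: the
  \<open>U\<close>-walks along each row of the array give the entries of \<open>T\<^sub>p\<^sup>U\<close>, and the \<open>V\<close>-walks,
  read along the columns of the transposed array, give the entries of \<open>T\<^sub>r\<close> for
  \<open>prime_bm N V\<close>.
\<close>

abbreviation index_arrays :: "nat \<Rightarrow> nat \<Rightarrow> nat \<Rightarrow> (nat \<Rightarrow> nat \<Rightarrow> nat) set" where
  "index_arrays r p n \<equiv> {..<r} \<rightarrow>\<^sub>E ({..<p} \<rightarrow>\<^sub>E {..<n})"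

lemma mprod_carrier:
  "\<forall>A\<in>set As. A \<in> carrier_mat n n \<Longrightarrow> mprod n As \<in> carrier_mat n n"
  by (induction As) (auto simp: mprod_def)

lemma mprod_snoc:
  assumes "\<forall>A\<in>set As. A \<in> carrier_mat n n" and "B \<in> carrier_mat n n"
  shows "mprod n (As @ [B]) = mprod n As * B"
  using assms
proof (induction As)
  case Nil
  then show ?case by (simp add: mprod_def)
next
  case (Cons A As)
  then have "mprod n ((A # As) @ [B]) = A * (mprod n As * B)"
    by (simp add: mprod_def)
  also have "\<dots> = mprod n (A # As) * B"
    using Cons.prems mprod_carrier[of As n]
    by (simp add: mprod_def assoc_mult_mat[of A n n _ n B n])
  finally show ?case .
qed

lemma pow_mat_eq_mprod:
  assumes "A \<in> carrier_mat n n"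
  shows "A ^\<^sub>m r = mprod n (replicate r A)"
proof (induction r)
  case (Suc r)
  have "replicate (Suc r) A = replicate r A @ [A]"
    by (simp add: replicate_append_same)
  then show ?case
    using Suc assms by (simp only: pow_mat.simps) (simp add: mprod_snoc)
qed (use assms in \<open>simp add: mprod_def\<close>)

lemma sum_PiE_insert:
  assumes "i \<notin> I"
  shows "(\<Sum>\<gamma>\<in>insert i I \<rightarrow>\<^sub>E S. f \<gamma>) = (\<Sum>\<gamma>\<in>I \<rightarrow>\<^sub>E S. \<Sum>w\<in>S. f (\<gamma>(i := w)))"
proof -
  have "(\<Sum>\<gamma>\<in>insert i I \<rightarrow>\<^sub>E S. f \<gamma>) = (\<Sum>(w, \<gamma>)\<in>S \<times> (I \<rightarrow>\<^sub>E S). f (\<gamma>(i := w)))"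
    using assms
    by (intro sum.reindex_bij_witness[where j = "\<lambda>g. (g i, g(i := undefined))"
          and i = "\<lambda>(w, g). g(i := w)"]) (auto simp: PiE_def extensional_def)
  also have "\<dots> = (\<Sum>\<gamma>\<in>I \<rightarrow>\<^sub>E S. \<Sum>w\<in>S. f (\<gamma>(i := w)))"
    by (subst sum.swap) (simp add: sum.cartesian_product)
  finally show ?thesis .
qed

lemma index_mult_mat_sum:
  assumes "A \<in> carrier_mat n n" and "B \<in> carrier_mat n n" and "u < n" and "v < n"
  shows "(A * B) $$ (u, v) = (\<Sum>w<n. A $$ (u, w) * B $$ (w, v))"
  using assms by (simp add: scalar_prod_def atLeast0LessThan)

text \<open>\<open>\<gamma>(Suc m := v)\<close> is the walk \<open>\<gamma>\<close> followed by the prescribed endpoint \<open>v\<close>.\<close>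

lemma mprod_entry_eq_sum_walks:
  assumes "\<And>s. s < Suc m \<Longrightarrow> As s \<in> carrier_mat n n" and "u < n" and "v < n"
  shows "mprod n (map As [0..<Suc m]) $$ (u, v) =
    (\<Sum>\<gamma>\<in>{..<Suc m} \<rightarrow>\<^sub>E {..<n}.
       if \<gamma> 0 = u then \<Prod>s<Suc m. As s $$ (\<gamma> s, (\<gamma>(Suc m := v)) (Suc s)) else 0)"
  using assms
proof (induction m arbitrary: v)
  case 0
  have "{..<Suc 0} = insert 0 {}" by auto
  with 0 show ?case
    by (simp add: mprod_def sum_PiE_insert)
next
  case (Suc m)
  let ?P = "mprod n (map As [0..<Suc m])"
  let ?f = "\<lambda>\<gamma>. if \<gamma> 0 = u then \<Prod>s<Suc (Suc m). As s $$ (\<gamma> s, (\<gamma>(Suc (Suc m) := v)) (Suc s)) else 0"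
  have car: "?P \<in> carrier_mat n n" "As (Suc m) \<in> carrier_mat n n"
    using Suc.prems by (auto intro!: mprod_carrier)
  have "map As [0..<Suc (Suc m)] = map As [0..<Suc m] @ [As (Suc m)]"
    by simp
  then have "mprod n (map As [0..<Suc (Suc m)]) $$ (u, v) = (?P * As (Suc m)) $$ (u, v)"
    using Suc.prems by (simp only:) (subst mprod_snoc, auto)
  also have "\<dots> = (\<Sum>w<n. ?P $$ (u, w) * As (Suc m) $$ (w, v))"
    using car Suc.prems(2,3) by (rule index_mult_mat_sum)
  also have "\<dots> = (\<Sum>w<n. \<Sum>\<gamma>\<in>{..<Suc m} \<rightarrow>\<^sub>E {..<n}.
      (if \<gamma> 0 = u then \<Prod>s<Suc m. As s $$ (\<gamma> s, (\<gamma>(Suc m := w)) (Suc s)) else 0) *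
      As (Suc m) $$ (w, v))"
    by (intro sum.cong refl, subst Suc.IH) (use Suc.prems in \<open>auto simp: sum_distrib_right\<close>)
  also have "\<dots> = (\<Sum>\<gamma>\<in>{..<Suc m} \<rightarrow>\<^sub>E {..<n}. \<Sum>w<n. ?f (\<gamma>(Suc m := w)))"
  proof (subst sum.swap, intro sum.cong refl)
    fix \<gamma> w
    have "(\<Prod>s<Suc m. As s $$ (\<gamma> s, (\<gamma>(Suc m := w)) (Suc s))) =
        (\<Prod>s<Suc m. As s $$ ((\<gamma>(Suc m := w)) s, (\<gamma>(Suc m := w, Suc (Suc m) := v)) (Suc s)))"
      by (intro prod.cong) auto
    then show "(if \<gamma> 0 = u then \<Prod>s<Suc m. As s $$ (\<gamma> s, (\<gamma>(Suc m := w)) (Suc s)) else 0) *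
        As (Suc m) $$ (w, v) = ?f (\<gamma>(Suc m := w))"
      by simp
  qed
  also have "\<dots> = (\<Sum>\<gamma>\<in>{..<Suc (Suc m)} \<rightarrow>\<^sub>E {..<n}. ?f \<gamma>)"
    by (rule sum_PiE_insert[of "Suc m" "{..<Suc m}", folded lessThan_Suc, symmetric]) simp
  finally show ?case .
qed

lemma mtrace_mprod_eq_sum_closed_walks:
  assumes "0 < p" and "\<And>s. s < p \<Longrightarrow> As s \<in> carrier_mat n n"
  shows "mtrace (mprod n (map As [0..<p])) =
    (\<Sum>\<gamma>\<in>{..<p} \<rightarrow>\<^sub>E {..<n}. \<Prod>s<p. As s $$ (\<gamma> s, \<gamma> ((s + 1) mod p)))"
proof -
  obtain m where p: "p = Suc m"
    using assms(1) gr0_implies_Suc by blast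
  have "mprod n (map As [0..<p]) \<in> carrier_mat n n"
    using assms(2) by (intro mprod_carrier) auto
  then have "mtrace (mprod n (map As [0..<p])) = (\<Sum>u<n. mprod n (map As [0..<p]) $$ (u, u))"
    by (simp add: mtrace_def)
  also have "\<dots> = (\<Sum>u<n. \<Sum>\<gamma>\<in>{..<p} \<rightarrow>\<^sub>E {..<n}.
      if \<gamma> 0 = u then \<Prod>s<p. As s $$ (\<gamma> s, (\<gamma>(p := u)) (Suc s)) else 0)"
    unfolding p using assms(2) by (intro sum.cong refl mprod_entry_eq_sum_walks) (auto simp: p)
  also have "\<dots> = (\<Sum>\<gamma>\<in>{..<p} \<rightarrow>\<^sub>E {..<n}. \<Prod>s<p. As s $$ (\<gamma> s, (\<gamma>(p := \<gamma> 0)) (Suc s)))"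
    using assms(1) by (subst sum.swap) (intro sum.cong refl, auto simp: PiE_iff)
  also have "\<dots> = (\<Sum>\<gamma>\<in>{..<p} \<rightarrow>\<^sub>E {..<n}. \<Prod>s<p. As s $$ (\<gamma> s, \<gamma> ((s + 1) mod p)))"
    by (intro sum.cong prod.cong refl) (auto simp: p mod_Suc)
  finally show ?thesis .
qed

lemma digit_Suc_less:
  assumes "s < p"
  shows "digit n (Suc p) x s = digit n p (x div n) s"
proof -
  from assms have "Suc p - 1 - s = Suc (p - 1 - s)"
    by simp
  then show ?thesis
    unfolding digit_def by (simp add: div_mult2_eq)
qed

lemma digit_Suc_last: "digit n (Suc p) x p = x mod n"
  by (simp add: digit_def)

lemma digit_inj:
  "x < n ^ p \<Longrightarrow> y < n ^ p \<Longrightarrow> \<forall>s<p. digit n p x s = digit n p y s \<Longrightarrow> x = y"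
proof (induction p arbitrary: x y)
  case (Suc p)
  have "0 < n"
    using Suc.prems(1) by (cases n) auto
  then have "x div n < n ^ p" "y div n < n ^ p"
    using Suc.prems(1,2) by (auto simp: div_less_iff_less_mult mult.commute)
  moreover have "\<forall>s<p. digit n p (x div n) s = digit n p (y div n) s"
    using Suc.prems(3) by (auto simp: digit_Suc_less[symmetric])
  ultimately have "x div n = y div n"
    using Suc.IH by blast
  moreover have "x mod n = y mod n"
    using Suc.prems(3)[rule_format, of p] by (simp add: digit_Suc_last)
  ultimately show ?case
    by (metis div_mod_decomp)
qed simp

lemma bij_betw_digit:
  assumes "0 < n"
  shows "bij_betw (\<lambda>x. \<lambda>s\<in>{..<p}. digit n p x s) {..<n ^ p} ({..<p} \<rightarrow>\<^sub>E {..<n})"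
proof -
  let ?f = "\<lambda>x. \<lambda>s\<in>{..<p}. digit n p x s"
  have inj: "inj_on ?f {..<n ^ p}"
  proof (rule inj_onI)
    fix x y assume "x \<in> {..<n ^ p}" "y \<in> {..<n ^ p}" and eq: "?f x = ?f y"
    have "digit n p x s = digit n p y s" if "s < p" for s
      using fun_cong[OF eq, of s] that by simp
    with \<open>x \<in> {..<n ^ p}\<close> \<open>y \<in> {..<n ^ p}\<close> show "x = y"
      by (intro digit_inj[of x n p y]) auto
  qed
  have "?f x \<in> {..<p} \<rightarrow>\<^sub>E {..<n}" for x
    using assms by (simp add: restrict_PiE_iff digit_def)
  then have "?f ` {..<n ^ p} \<subseteq> {..<p} \<rightarrow>\<^sub>E {..<n}"
    by blast
  moreover have "card (?f ` {..<n ^ p}) = card ({..<p} \<rightarrow>\<^sub>E {..<n})"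
    using inj by (simp add: card_image card_PiE)
  ultimately have "?f ` {..<n ^ p} = {..<p} \<rightarrow>\<^sub>E {..<n}"
    by (intro card_subset_eq) (auto simp: finite_PiE)
  with inj show ?thesis
    by (simp add: bij_betw_def)
qed

lemma bij_betw_PiE_compose:
  assumes "bij_betw h A B"
  shows "bij_betw (\<lambda>w. \<lambda>t\<in>I. h (w t)) (I \<rightarrow>\<^sub>E A) (I \<rightarrow>\<^sub>E B)"
proof (rule bij_betw_byWitness[where f'="\<lambda>v. \<lambda>t\<in>I. inv_into A h (v t)"])
  have "\<And>a. a \<in> A \<Longrightarrow> inv_into A h (h a) = a"
    using assms by (simp add: bij_betw_def)
  then show "\<forall>a\<in>I \<rightarrow>\<^sub>E A. (\<lambda>t\<in>I. inv_into A h ((\<lambda>t\<in>I. h (a t)) t)) = a"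
    by (auto simp: PiE_def extensional_def fun_eq_iff)
  have "\<And>b. b \<in> B \<Longrightarrow> h (inv_into A h b) = b"
    using assms by (meson bij_betw_inv_into_right)
  then show "\<forall>b\<in>I \<rightarrow>\<^sub>E B. (\<lambda>t\<in>I. h ((\<lambda>t\<in>I. inv_into A h (b t)) t)) = b"
    by (auto simp: PiE_def extensional_def fun_eq_iff)
  have "\<And>a. a \<in> A \<Longrightarrow> h a \<in> B"
    using assms by (meson bij_betwE)
  then show "(\<lambda>w. \<lambda>t\<in>I. h (w t)) ` (I \<rightarrow>\<^sub>E A) \<subseteq> I \<rightarrow>\<^sub>E B"
    by (auto simp: PiE_iff)
  have "\<And>b. b \<in> B \<Longrightarrow> inv_into A h b \<in> A"
    using assms by (meson bij_betwE bij_betw_inv_into)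
  then show "(\<lambda>v. \<lambda>t\<in>I. inv_into A h (v t)) ` (I \<rightarrow>\<^sub>E B) \<subseteq> I \<rightarrow>\<^sub>E A"
    by (auto simp: PiE_iff)
qed

lemma T_entry_cong:
  "(\<And>s. s < p \<Longrightarrow> x s = x' s) \<Longrightarrow> (\<And>s. s < p \<Longrightarrow> y s = y' s) \<Longrightarrow>
   T_entry n U p x y = T_entry n U p x' y'"
  unfolding T_entry_def by (intro arg_cong[where f="\<lambda>l. ntr n (mprod n l)"] map_cong) auto

lemma c_pr_eq_sum_T_entry_cycles:
  assumes "0 < n" and "0 < r"
  shows "c_pr n U p r =
    (\<Sum>\<alpha>\<in>index_arrays r p n. \<Prod>t<r. T_entry n U p (\<alpha> t) (\<alpha> ((t + 1) mod r)))"
proof -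
  let ?T = "T_mat n U p"
  define digits where "digits x = (\<lambda>s\<in>{..<p}. digit n p x s)" for x
  have T: "?T \<in> carrier_mat (n ^ p) (n ^ p)"
    by (simp add: T_mat_def)
  have bij: "bij_betw (\<lambda>w. \<lambda>t\<in>{..<r}. digits (w t)) ({..<r} \<rightarrow>\<^sub>E {..<n ^ p}) (index_arrays r p n)"
    unfolding digits_def by (intro bij_betw_PiE_compose bij_betw_digit assms(1))
  have "c_pr n U p r = mtrace (mprod (n ^ p) (map (\<lambda>_. ?T) [0..<r]))"
    by (simp add: c_pr_def pow_mat_eq_mprod[OF T] map_replicate_const)
  also have "\<dots> = (\<Sum>w\<in>{..<r} \<rightarrow>\<^sub>E {..<n ^ p}. \<Prod>t<r. ?T $$ (w t, w ((t + 1) mod r)))"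
    using assms(2) T by (rule mtrace_mprod_eq_sum_closed_walks)
  also have "\<dots> = (\<Sum>w\<in>{..<r} \<rightarrow>\<^sub>E {..<n ^ p}.
      \<Prod>t<r. T_entry n U p (digits (w t)) (digits (w ((t + 1) mod r))))"
  proof (intro sum.cong prod.cong refl)
    fix w t assume "w \<in> {..<r} \<rightarrow>\<^sub>E {..<n ^ p}" and "t \<in> {..<r}"
    then have "w t < n ^ p" and "w ((t + 1) mod r) < n ^ p"
      using assms(2) by (auto simp: PiE_iff)
    then show "?T $$ (w t, w ((t + 1) mod r)) =
        T_entry n U p (digits (w t)) (digits (w ((t + 1) mod r)))"
      by (simp add: T_mat_def digits_def cong: T_entry_cong)
  qed
  also have "\<dots> = (\<Sum>\<alpha>\<in>index_arrays r p n. \<Prod>t<r. T_entry n U p (\<alpha> t) (\<alpha> ((t + 1) mod r)))"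
    using assms(2) sum.reindex_bij_betw[OF bij,
        of "\<lambda>\<alpha>. \<Prod>t<r. T_entry n U p (\<alpha> t) (\<alpha> ((t + 1) mod r))"]
    by simp
  finally show ?thesis .
qed

lemma bij_betw_PiE_pair:
  assumes "bij_betw h (A \<times> B) C"
  shows "bij_betw (\<lambda>(f, g). \<lambda>s\<in>I. h (f s, g s)) ((I \<rightarrow>\<^sub>E A) \<times> (I \<rightarrow>\<^sub>E B)) (I \<rightarrow>\<^sub>E C)"
proof (rule bij_betw_byWitness[where
      f'="\<lambda>\<gamma>. (\<lambda>s\<in>I. fst (inv_into (A \<times> B) h (\<gamma> s)), \<lambda>s\<in>I. snd (inv_into (A \<times> B) h (\<gamma> s)))"])
  have "\<And>x. x \<in> A \<times> B \<Longrightarrow> inv_into (A \<times> B) h (h x) = x"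
    using assms by (simp add: bij_betw_def)
  then show "\<forall>x\<in>(I \<rightarrow>\<^sub>E A) \<times> (I \<rightarrow>\<^sub>E B). (\<lambda>\<gamma>. (\<lambda>s\<in>I. fst (inv_into (A \<times> B) h (\<gamma> s)),
      \<lambda>s\<in>I. snd (inv_into (A \<times> B) h (\<gamma> s)))) ((\<lambda>(f, g). \<lambda>s\<in>I. h (f s, g s)) x) = x"
    by (auto simp: PiE_def extensional_def fun_eq_iff Pi_iff)
  have "\<And>c. c \<in> C \<Longrightarrow> h (inv_into (A \<times> B) h c) = c"
    using assms by (meson bij_betw_inv_into_right)
  then show "\<forall>\<gamma>\<in>I \<rightarrow>\<^sub>E C. (\<lambda>(f, g). \<lambda>s\<in>I. h (f s, g s)) (\<lambda>s\<in>I. fst (inv_into (A \<times> B) h (\<gamma> s)),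
      \<lambda>s\<in>I. snd (inv_into (A \<times> B) h (\<gamma> s))) = \<gamma>"
    by (auto simp: PiE_def extensional_def fun_eq_iff)
  have "\<And>x. x \<in> A \<times> B \<Longrightarrow> h x \<in> C"
    using assms by (meson bij_betwE)
  then show "(\<lambda>(f, g). \<lambda>s\<in>I. h (f s, g s)) ` ((I \<rightarrow>\<^sub>E A) \<times> (I \<rightarrow>\<^sub>E B)) \<subseteq> I \<rightarrow>\<^sub>E C"
    by (auto simp: PiE_iff)
  have "\<And>c. c \<in> C \<Longrightarrow> inv_into (A \<times> B) h c \<in> A \<times> B"
    using assms by (meson bij_betwE bij_betw_inv_into)
  then show "(\<lambda>\<gamma>. (\<lambda>s\<in>I. fst (inv_into (A \<times> B) h (\<gamma> s)), \<lambda>s\<in>I. snd (inv_into (A \<times> B) h (\<gamma> s))))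
      ` (I \<rightarrow>\<^sub>E C) \<subseteq> (I \<rightarrow>\<^sub>E A) \<times> (I \<rightarrow>\<^sub>E B)"
    by (force simp: PiE_iff)
qed

lemma sum_PiE_bij_pair:
  assumes "bij_betw h (A \<times> B) C"
  shows "(\<Sum>\<gamma>\<in>I \<rightarrow>\<^sub>E C. G \<gamma>) = (\<Sum>f\<in>I \<rightarrow>\<^sub>E A. \<Sum>g\<in>I \<rightarrow>\<^sub>E B. G (\<lambda>s\<in>I. h (f s, g s)))"
proof -
  have "(\<Sum>x\<in>(I \<rightarrow>\<^sub>E A) \<times> (I \<rightarrow>\<^sub>E B). G ((\<lambda>(f, g). \<lambda>s\<in>I. h (f s, g s)) x)) = (\<Sum>\<gamma>\<in>I \<rightarrow>\<^sub>E C. G \<gamma>)"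
    using bij_betw_PiE_pair[OF assms] by (rule sum.reindex_bij_betw)
  then show ?thesis
    by (simp add: sum.cartesian_product case_prod_beta')
qed

lemma pair_encode_less: "i < M \<Longrightarrow> a < N \<Longrightarrow> i * N + a < M * (N :: nat)"
  using mult_le_mono1[of "Suc i" M N] by simp

lemma bij_betw_pair_encode:
  assumes "0 < N"
  shows "bij_betw (\<lambda>(i, a). i * N + a) ({..<M} \<times> {..<N}) {..<M * N :: nat}"
  by (rule bij_betw_byWitness[where f'="\<lambda>x. (x div N, x mod N)"])
     (use assms in \<open>auto simp: pair_encode_less less_mult_imp_div_less\<close>)

lemma sum_PiE_split_pair_encode:
  fixes M N :: nat
  assumes "0 < N"
  shows "(\<Sum>\<gamma>\<in>I \<rightarrow>\<^sub>E {..<M * N}. G \<gamma>) =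
    (\<Sum>k\<in>I \<rightarrow>\<^sub>E {..<M}. \<Sum>c\<in>I \<rightarrow>\<^sub>E {..<N}. G (\<lambda>s\<in>I. k s * N + c s))"
  using sum_PiE_bij_pair[OF bij_betw_pair_encode[OF assms]] by simp

lemma sum_PiE_PiE_split_pair_encode:
  fixes M N :: nat
  assumes "0 < N"
  shows "(\<Sum>\<alpha>\<in>I \<rightarrow>\<^sub>E (J \<rightarrow>\<^sub>E {..<M * N}). G \<alpha>) =
    (\<Sum>i\<in>I \<rightarrow>\<^sub>E (J \<rightarrow>\<^sub>E {..<M}). \<Sum>a\<in>I \<rightarrow>\<^sub>E (J \<rightarrow>\<^sub>E {..<N}). G (\<lambda>t\<in>I. \<lambda>s\<in>J. i t s * N + a t s))"
  using sum_PiE_bij_pair[OF bij_betw_PiE_pair[OF bij_betw_pair_encode[OF assms]]] by simp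

lemma sum_PiE_PiE_swap:
  "(\<Sum>a\<in>I \<rightarrow>\<^sub>E (J \<rightarrow>\<^sub>E S). G a) = (\<Sum>b\<in>J \<rightarrow>\<^sub>E (I \<rightarrow>\<^sub>E S). G (\<lambda>t\<in>I. \<lambda>s\<in>J. b s t))"
proof (rule sum.reindex_bij_witness[where j="\<lambda>a. \<lambda>s\<in>J. \<lambda>t\<in>I. a t s" and i="\<lambda>b. \<lambda>t\<in>I. \<lambda>s\<in>J. b s t"])
  fix a assume "a \<in> I \<rightarrow>\<^sub>E (J \<rightarrow>\<^sub>E S)"
  then have "(\<lambda>t\<in>I. \<lambda>s\<in>J. (\<lambda>s\<in>J. \<lambda>t\<in>I. a t s) s t) = a"
    by (auto simp: PiE_iff extensional_def fun_eq_iff)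
  then show "G (\<lambda>t\<in>I. \<lambda>s\<in>J. (\<lambda>s\<in>J. \<lambda>t\<in>I. a t s) s t) = G a"
    by simp
qed (auto simp: PiE_def extensional_def fun_eq_iff Pi_def)

lemma qtensor_carrier: "qtensor M N Q U V \<alpha> \<beta> \<in> carrier_mat (M * N) (M * N)"
  by (simp add: qtensor_def Let_def)

definition twist :: "(nat \<Rightarrow> nat \<Rightarrow> complex) \<Rightarrow> nat \<Rightarrow> nat \<Rightarrow> nat \<Rightarrow> nat \<Rightarrow> complex" where
  "twist Q i j c d = Q i c * Q j d / (Q i d * Q j c)"

lemma qtensor_index:
  fixes M N :: nat
  assumes "i < M" "j < M" "a < N" "b < N" "k < M" "l < M" "c < N" "d < N"
  shows "qtensor M N Q U V (i * N + a) (j * N + b) $$ (k * N + c, l * N + d) =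
    twist Q i j c d * U i j $$ (k, l) * V a b $$ (c, d)"
  using assms by (simp add: qtensor_def twist_def Let_def pair_encode_less)

lemma T_entry_qtensor:
  fixes M N :: nat
  assumes "0 < N" and "0 < p" and "\<And>s. s < p \<Longrightarrow> i s < M \<and> j s < M \<and> a s < N \<and> b s < N"
  shows "T_entry (M * N) (qtensor M N Q U V) p (\<lambda>s. i s * N + a s) (\<lambda>s. j s * N + b s) =
    1 / of_nat (M * N) * (\<Sum>k\<in>{..<p} \<rightarrow>\<^sub>E {..<M}. \<Sum>c\<in>{..<p} \<rightarrow>\<^sub>E {..<N}. \<Prod>s<p.
      twist Q (i s) (j s) (c s) (c ((s + 1) mod p)) *
      U (i s) (j s) $$ (k s, k ((s + 1) mod p)) * V (a s) (b s) $$ (c s, c ((s + 1) mod p)))"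
proof -
  let ?W = "qtensor M N Q U V"
  have "mtrace (mprod (M * N) (map (\<lambda>s. ?W (i s * N + a s) (j s * N + b s)) [0..<p])) =
      (\<Sum>\<gamma>\<in>{..<p} \<rightarrow>\<^sub>E {..<M * N}.
        \<Prod>s<p. ?W (i s * N + a s) (j s * N + b s) $$ (\<gamma> s, \<gamma> ((s + 1) mod p)))"
    using assms(2) qtensor_carrier by (rule mtrace_mprod_eq_sum_closed_walks)
  also have "\<dots> = (\<Sum>k\<in>{..<p} \<rightarrow>\<^sub>E {..<M}. \<Sum>c\<in>{..<p} \<rightarrow>\<^sub>E {..<N}. \<Prod>s<p.
      ?W (i s * N + a s) (j s * N + b s) $$
        (k s * N + c s, k ((s + 1) mod p) * N + c ((s + 1) mod p)))"
    using assms(1,2) by (simp add: sum_PiE_split_pair_encode)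
  also have "\<dots> = (\<Sum>k\<in>{..<p} \<rightarrow>\<^sub>E {..<M}. \<Sum>c\<in>{..<p} \<rightarrow>\<^sub>E {..<N}. \<Prod>s<p.
      twist Q (i s) (j s) (c s) (c ((s + 1) mod p)) *
      U (i s) (j s) $$ (k s, k ((s + 1) mod p)) * V (a s) (b s) $$ (c s, c ((s + 1) mod p)))"
    using assms(2,3) by (intro sum.cong prod.cong refl qtensor_index) (auto simp: PiE_iff)
  finally show ?thesis
    by (simp add: T_entry_def ntr_def)
qed

lemma sum_PiE_prod_closed_walks:
  assumes "0 < p" and "finite I" and "\<And>t s. t \<in> I \<Longrightarrow> s < p \<Longrightarrow> A t s \<in> carrier_mat n n"
  shows "(\<Sum>K\<in>I \<rightarrow>\<^sub>E ({..<p} \<rightarrow>\<^sub>E {..<n}). \<Prod>t\<in>I. \<Prod>s<p. A t s $$ (K t s, K t ((s + 1) mod p))) =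
    (\<Prod>t\<in>I. mtrace (mprod n (map (A t) [0..<p])))"
proof -
  have "(\<Prod>t\<in>I. mtrace (mprod n (map (A t) [0..<p]))) =
      (\<Prod>t\<in>I. \<Sum>k\<in>{..<p} \<rightarrow>\<^sub>E {..<n}. \<Prod>s<p. A t s $$ (k s, k ((s + 1) mod p)))"
    using assms by (intro prod.cong refl mtrace_mprod_eq_sum_closed_walks) auto
  also have "\<dots> = (\<Sum>K\<in>I \<rightarrow>\<^sub>E ({..<p} \<rightarrow>\<^sub>E {..<n}). \<Prod>t\<in>I. \<Prod>s<p. A t s $$ (K t s, K t ((s + 1) mod p)))"
    using assms(2) by (rule prod_sum_PiE) (simp add: finite_PiE)
  finally show ?thesis ..
qed

lemma sum_PiE_walks_eq_T_entry_cycle: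
  assumes "0 < n" and "0 < p" and U: "\<forall>i<n. \<forall>j<n. U i j \<in> carrier_mat n n"
    and x: "x \<in> index_arrays r p n"
  shows "(\<Sum>K\<in>index_arrays r p n.
      \<Prod>t<r. \<Prod>s<p. U (x t s) (x ((t + 1) mod r) s) $$ (K t s, K t ((s + 1) mod p))) =
    of_nat (n ^ r) * (\<Prod>t<r. T_entry n U p (x t) (x ((t + 1) mod r)))"
proof -
  have "(\<Sum>K\<in>index_arrays r p n.
      \<Prod>t<r. \<Prod>s<p. U (x t s) (x ((t + 1) mod r) s) $$ (K t s, K t ((s + 1) mod p))) =
      (\<Prod>t<r. mtrace (mprod n (map (\<lambda>s. U (x t s) (x ((t + 1) mod r) s)) [0..<p])))"
    using assms(2) U x by (intro sum_PiE_prod_closed_walks) (auto simp: PiE_iff)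
  also have "\<dots> = (\<Prod>t<r. of_nat n * T_entry n U p (x t) (x ((t + 1) mod r)))"
    using assms(1) by (simp add: T_entry_def ntr_def)
  finally show ?thesis
    by (simp add: prod.distrib)
qed

lemma sum_PiE_walks_eq_T_entry_prime_cycle:
  assumes "0 < n" and "0 < r"
  shows "(\<Sum>a\<in>index_arrays r p n.
      \<Prod>t<r. \<Prod>s<p. V (a t s) (a ((t + 1) mod r) s) $$ (C t s, C t ((s + 1) mod p))) =
    of_nat (n ^ p) * (\<Prod>s<p. T_entry n (prime_bm n V) r (\<lambda>t. C t s) (\<lambda>t. C t ((s + 1) mod p)))"
proof -
  have "(\<Sum>a\<in>index_arrays r p n.
      \<Prod>t<r. \<Prod>s<p. V (a t s) (a ((t + 1) mod r) s) $$ (C t s, C t ((s + 1) mod p))) =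
      (\<Sum>b\<in>index_arrays p r n. \<Prod>s<p. \<Prod>t<r.
        prime_bm n V (C t s) (C t ((s + 1) mod p)) $$ (b s t, b s ((t + 1) mod r)))"
    using assms(2)
    by (subst sum_PiE_PiE_swap, subst prod.swap)
       (intro sum.cong prod.cong refl, auto simp: PiE_iff prime_bm_def)
  also have "\<dots> =
      (\<Prod>s<p. mtrace (mprod n (map (\<lambda>t. prime_bm n V (C t s) (C t ((s + 1) mod p))) [0..<r])))"
    using assms(2) by (intro sum_PiE_prod_closed_walks) (auto simp: prime_bm_def)
  also have "\<dots> =
      (\<Prod>s<p. of_nat n * T_entry n (prime_bm n V) r (\<lambda>t. C t s) (\<lambda>t. C t ((s + 1) mod p)))"
    using assms(1) by (simp add: T_entry_def ntr_def)
  finally show ?thesis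
    by (simp add: prod.distrib)
qed

lemma sum_triple_factor:
  fixes X :: "'c \<Rightarrow> 'd :: comm_semiring_1"
  shows "(\<Sum>a\<in>A. \<Sum>k\<in>B. \<Sum>c\<in>C. X c * Y k * Z a c) = (\<Sum>c\<in>C. X c * (\<Sum>k\<in>B. Y k) * (\<Sum>a\<in>A. Z a c))"
proof -
  have "(\<Sum>a\<in>A. \<Sum>k\<in>B. \<Sum>c\<in>C. X c * Y k * Z a c) = (\<Sum>c\<in>C. \<Sum>a\<in>A. \<Sum>k\<in>B. X c * Y k * Z a c)"
    by (subst sum.swap) (simp add: sum.swap[of _ B])
  also have "\<dots> = (\<Sum>c\<in>C. X c * (\<Sum>k\<in>B. Y k) * (\<Sum>a\<in>A. Z a c))"
    by (simp add: sum_distrib_left sum_distrib_right mult_ac sum.swap[of _ A])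
  finally show ?thesis .
qed

lemma c_pr_qtensor_eq_sum_walks:
  fixes M N :: nat
  assumes "0 < M" "0 < N" "0 < p" "0 < r"
  shows "c_pr (M * N) (qtensor M N Q U V) p r = (1 / of_nat (M * N)) ^ r *
    (\<Sum>i\<in>index_arrays r p M. \<Sum>a\<in>index_arrays r p N.
     \<Sum>K\<in>index_arrays r p M. \<Sum>C\<in>index_arrays r p N.
      \<Prod>t<r. \<Prod>s<p. twist Q (i t s) (i ((t + 1) mod r) s) (C t s) (C t ((s + 1) mod p)) *
        U (i t s) (i ((t + 1) mod r) s) $$ (K t s, K t ((s + 1) mod p)) *
        V (a t s) (a ((t + 1) mod r) s) $$ (C t s, C t ((s + 1) mod p)))"
proof -
  let ?W = "qtensor M N Q U V"
  have "c_pr (M * N) ?W p r = (\<Sum>i\<in>index_arrays r p M. \<Sum>a\<in>index_arrays r p N. \<Prod>t<r.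
      T_entry (M * N) ?W p (\<lambda>s. i t s * N + a t s)
        (\<lambda>s. i ((t + 1) mod r) s * N + a ((t + 1) mod r) s))"
    using assms
    by (simp add: c_pr_eq_sum_T_entry_cycles sum_PiE_PiE_split_pair_encode cong: T_entry_cong)
  also have "\<dots> = (\<Sum>i\<in>index_arrays r p M. \<Sum>a\<in>index_arrays r p N. \<Prod>t<r.
      1 / of_nat (M * N) * (\<Sum>k\<in>{..<p} \<rightarrow>\<^sub>E {..<M}. \<Sum>c\<in>{..<p} \<rightarrow>\<^sub>E {..<N}. \<Prod>s<p.
        twist Q (i t s) (i ((t + 1) mod r) s) (c s) (c ((s + 1) mod p)) *
        U (i t s) (i ((t + 1) mod r) s) $$ (k s, k ((s + 1) mod p)) *
        V (a t s) (a ((t + 1) mod r) s) $$ (c s, c ((s + 1) mod p))))"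
    using assms by (intro sum.cong prod.cong refl T_entry_qtensor) (auto simp: PiE_iff)
  also have "\<dots> = (\<Sum>i\<in>index_arrays r p M. \<Sum>a\<in>index_arrays r p N. (1 / of_nat (M * N)) ^ r *
      (\<Prod>t<r. \<Sum>k\<in>{..<p} \<rightarrow>\<^sub>E {..<M}. \<Sum>c\<in>{..<p} \<rightarrow>\<^sub>E {..<N}. \<Prod>s<p.
        twist Q (i t s) (i ((t + 1) mod r) s) (c s) (c ((s + 1) mod p)) *
        U (i t s) (i ((t + 1) mod r) s) $$ (k s, k ((s + 1) mod p)) *
        V (a t s) (a ((t + 1) mod r) s) $$ (c s, c ((s + 1) mod p))))"
  proof -
    have "(\<Prod>t<r. 1 / of_nat (M * N) * Y t) = (1 / of_nat (M * N)) ^ r * (\<Prod>t<r. Y t)"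
      for Y :: "nat \<Rightarrow> complex"
      by (simp only: prod.distrib prod_constant card_lessThan)
    then show ?thesis
      by (simp only:)
  qed
  finally show ?thesis
    by (simp add: prod_sum_PiE finite_PiE sum_distrib_left)
qed

lemma c_pr_qtensor_factorization:
  fixes M N :: nat
  assumes "0 < M" "0 < N" "0 < p" "0 < r"
  shows "c_pr (M * N) (qtensor M N Q U V) p r = (1 / of_nat (M * N)) ^ r *
    (\<Sum>i\<in>index_arrays r p M. \<Sum>C\<in>index_arrays r p N.
      (\<Prod>t<r. \<Prod>s<p. twist Q (i t s) (i ((t + 1) mod r) s) (C t s) (C t ((s + 1) mod p))) *
      (\<Sum>K\<in>index_arrays r p M.
        \<Prod>t<r. \<Prod>s<p. U (i t s) (i ((t + 1) mod r) s) $$ (K t s, K t ((s + 1) mod p))) *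
      (\<Sum>a\<in>index_arrays r p N.
        \<Prod>t<r. \<Prod>s<p. V (a t s) (a ((t + 1) mod r) s) $$ (C t s, C t ((s + 1) mod p))))"
  using assms by (simp add: c_pr_qtensor_eq_sum_walks prod.distrib sum_triple_factor)

theorem lemma2p7:
  fixes M N p r :: nat
    and U V :: "nat \<Rightarrow> nat \<Rightarrow> complex mat"
    and Q :: "nat \<Rightarrow> nat \<Rightarrow> complex"
  assumes "projective_model M U"
    and "projective_model N V"
    and "\<forall>i<M. \<forall>c<N. cmod (Q i c) = 1"
    and "p \<ge> 1" and "r \<ge> 1"
  shows "c_pr (M*N) (qtensor M N Q U V) p r =
    1 / of_nat ((M*N)^r) *
    (\<Sum>i\<in>{..<r} \<rightarrow>\<^sub>E ({..<p} \<rightarrow>\<^sub>E {..<M}).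
     \<Sum>b\<in>{..<r} \<rightarrow>\<^sub>E ({..<p} \<rightarrow>\<^sub>E {..<N}).
       (of_nat (M^r) * (\<Prod>t<r. T_entry M U p (i t) (i ((t+1) mod r)))) *
       (of_nat (N^p) * (\<Prod>s<p. T_entry N (prime_bm N V) r
                              (\<lambda>t. b t s) (\<lambda>t. b t ((s+1) mod p)))) *
       (\<Prod>t<r. \<Prod>s<p.
          Q (i t s) (b t s) * Q (i ((t+1) mod r) s) (b t ((s+1) mod p)) /
          (Q (i t s) (b t ((s+1) mod p)) * Q (i ((t+1) mod r) s) (b t s))))"
proof -
  have "0 < p" "0 < r"
    using assms(4,5) by simp_all
  show ?thesis
  proof (cases "M * N = 0")
    case True
    \<comment> \<open>The left side is the trace of a \<open>0 \<times> 0\<close> matrix, the right side vanishes as \<open>1 / 0 = 0\<close>.\<close>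
    then have "dim_row (T_mat (M * N) (qtensor M N Q U V) p ^\<^sub>m r) = 0"
      and "1 / of_nat ((M * N) ^ r) = (0 :: complex)"
      using \<open>0 < p\<close> \<open>0 < r\<close> by (simp_all add: T_mat_def)
    then show ?thesis
      by (simp add: c_pr_def mtrace_def)
  next
    case False
    then have "0 < M" "0 < N"
      by simp_all
    have U: "\<forall>i<M. \<forall>j<M. U i j \<in> carrier_mat M M"
      using assms(1) by (simp add: projective_model_def magic_def orth_proj_def)
    show ?thesis
      unfolding c_pr_qtensor_factorization[OF \<open>0 < M\<close> \<open>0 < N\<close> \<open>0 < p\<close> \<open>0 < r\<close>]
        of_nat_power power_one_over[symmetric]
      by (rule arg_cong[where f = "(*) ((1 / of_nat (M * N)) ^ r)"], intro sum.cong refl,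
          simp only: sum_PiE_walks_eq_T_entry_cycle[OF \<open>0 < M\<close> \<open>0 < p\<close> U]
          sum_PiE_walks_eq_T_entry_prime_cycle[OF \<open>0 < N\<close> \<open>0 < r\<close>])
        (simp add: twist_def mult_ac)
  qed
qed

end
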